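(* Let $X$ be an infinite connected normal Hausdorff space which has no quotient space homeomorphic to $[0,1]$ (i.e. admits no continuous quotient surjection onto $[0,1]$). Then $X$ is punctiform and $X$ is not locally connected.
   Context: A space is punctiform if it contains no connected compact subset with more than one point. A surjection $f\colon X\to Y$ is a quotient map if for every $G\subseteq Y$, $G$ is open in $Y$ iff $f^{-1}(G)$ is open in $X$. *)

theory Defs
  imports "HOL-Analysis.Analysis"
begin

definition punctiform :: "'a topology \<Rightarrow> bool" where
  "punctiform X \<longleftrightarrow>
     (\<forall>C. C \<subseteq> topspace X \<and> compactin X C \<and> connectedin X C \<longrightarrow>
          \<not> (\<exists>x y. x \<in> C \<and> y \<in> C \<and> x \<noteq> y))"

end

theory Submission
  imports Defs
begin

text \<open>Urysohn's lemma gives a continuous \<open>f: X \<rightarrow> [0,1]\<close> separating any two points, and \<open>f\<close>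
  maps every connected set containing both of them onto \<open>[0,1]\<close>. If that set \<open>C\<close> is compact,
  \<open>f\<close> restricted to \<open>C\<close> is a closed surjection and hence a quotient map, and then so is \<open>f\<close>
  itself; so \<open>X\<close> is punctiform. If \<open>X\<close> were locally connected, the quotient topology that \<open>f\<close>
  induces on \<open>[0,1]\<close> would be a connected, locally connected refinement of the Euclidean topology.
  In such a refinement every connected open set \<open>V\<close> is a Euclidean neighbourhood of each
  \<open>t \<in> V\<close>, for if \<open>V\<close> lay on one side of \<open>t\<close>, the closed half-line on that side would be the union
  of \<open>V\<close> and an open half-line, hence clopen. So the refinement is trivial and \<open>f\<close> is a quotient map.\<close>

definition final_topology :: "'a topology \<Rightarrow> ('a \<Rightarrow> 'b) \<Rightarrow> 'b set \<Rightarrow> 'b topology" where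
  "final_topology X f S = topology (\<lambda>U. U \<subseteq> S \<and> openin X {x \<in> topspace X. f x \<in> U})"

lemma openin_final_topology:
  "openin (final_topology X f S) U \<longleftrightarrow> U \<subseteq> S \<and> openin X {x \<in> topspace X. f x \<in> U}"
proof -
  define P where "P = (\<lambda>U. U \<subseteq> S \<and> openin X {x \<in> topspace X. f x \<in> U})"
  have "P (U \<inter> V)" if "P U" "P V" for U V
  proof -
    have "{x \<in> topspace X. f x \<in> U \<inter> V} = {x \<in> topspace X. f x \<in> U} \<inter> {x \<in> topspace X. f x \<in> V}"
      by auto
    then show ?thesis
      using that by (auto simp: P_def)
  qed
  moreover have "P (\<Union>K)" if "\<forall>U\<in>K. P U" for K
  proof -
    have "{x \<in> topspace X. f x \<in> \<Union>K} = (\<Union>U\<in>K. {x \<in> topspace X. f x \<in> U})"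
      by auto
    then show ?thesis
      using that by (auto simp: P_def)
  qed
  ultimately have "istopology P"
    unfolding istopology_def by blast
  then have "openin (topology P) = P"
    by simp
  then show ?thesis
    by (simp add: final_topology_def P_def)
qed

lemma topspace_final_topology:
  assumes "f ` topspace X \<subseteq> S"
  shows "topspace (final_topology X f S) = S"
proof
  show "topspace (final_topology X f S) \<subseteq> S"
    using openin_final_topology [of X f S "topspace (final_topology X f S)"] by simp
  have "{x \<in> topspace X. f x \<in> S} = topspace X"
    using assms by auto
  then have "openin (final_topology X f S) S"
    by (simp add: openin_final_topology)
  then show "S \<subseteq> topspace (final_topology X f S)"
    by (rule openin_subset)
qed

lemma quotient_map_final_topology:
  assumes "f ` topspace X = S"
  shows "quotient_map X (final_topology X f S) f"
  using assms by (auto simp: quotient_map_def openin_final_topology topspace_final_topology)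

lemma is_interval_neighbourhood:
  fixes S V :: "real set"
  assumes V: "is_interval V" "t \<in> V"
    and below: "\<And>s. s \<in> S \<Longrightarrow> s < t \<Longrightarrow> \<exists>v\<in>V. v < t"
    and above: "\<And>s. s \<in> S \<Longrightarrow> t < s \<Longrightarrow> \<exists>v\<in>V. t < v"
  shows "\<exists>e>0. \<forall>x\<in>S. dist x t < e \<longrightarrow> x \<in> V"
proof -
  obtain e1 where e1: "e1 > 0" "\<And>x. x \<in> S \<Longrightarrow> t - e1 < x \<Longrightarrow> x \<le> t \<Longrightarrow> x \<in> V"
  proof (cases "\<exists>s\<in>S. s < t")
    case True
    then obtain v where "v \<in> V" "v < t"
      using below by blast
    moreover have "x \<in> V" if "v \<le> x" "x \<le> t" for x
      using V(1) \<open>v \<in> V\<close> V(2) that unfolding is_interval_1 by blast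
    ultimately show ?thesis
      by (intro that [of "t - v"]) auto
  next
    case False
    then have "x \<in> V" if "x \<in> S" "x \<le> t" for x
      using V(2) that by (metis order_less_le)
    then show ?thesis
      by (intro that [of 1]) auto
  qed
  obtain e2 where e2: "e2 > 0" "\<And>x. x \<in> S \<Longrightarrow> t \<le> x \<Longrightarrow> x < t + e2 \<Longrightarrow> x \<in> V"
  proof (cases "\<exists>s\<in>S. t < s")
    case True
    then obtain v where "v \<in> V" "t < v"
      using above by blast
    moreover have "x \<in> V" if "t \<le> x" "x \<le> v" for x
      using V(1) V(2) \<open>v \<in> V\<close> that unfolding is_interval_1 by blast
    ultimately show ?thesis
      by (intro that [of "v - t"]) auto
  next
    case False
    then have "x \<in> V" if "x \<in> S" "t \<le> x" for x
      using V(2) that by (metis order_less_le)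
    then show ?thesis
      by (intro that [of 1]) auto
  qed
  show ?thesis
  proof (intro exI conjI ballI impI)
    show "min e1 e2 > 0"
      using e1 e2 by simp
    fix x assume "x \<in> S" "dist x t < min e1 e2"
    then have "t - e1 < x" "x < t + e2"
      by (auto simp: dist_real_def)
    then show "x \<in> V"
      using e1(2) e2(2) \<open>x \<in> S\<close> by (cases "x \<le> t") auto
  qed
qed

lemma connected_refinement_open_not_subset:
  fixes S :: "real set"
  assumes Y: "connected_space Y" "topspace Y = S"
    and finer: "\<And>U. openin (top_of_set S) U \<Longrightarrow> openin Y U"
    and V: "openin Y V" "t \<in> V"
    and G: "open G" "closed (insert t G)"
    and s: "s \<in> S" "s \<notin> insert t G"
  shows "\<not> V \<subseteq> insert t G"
proof
  assume sub: "V \<subseteq> insert t G"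
  define T where "T = S \<inter> insert t G"
  have "T = V \<union> (S \<inter> G)"
    using sub V openin_subset Y(2) by (auto simp: T_def)
  then have "openin Y T"
    using V G(1) by (simp add: finer openin_Un openin_open_Int)
  moreover have "closedin Y T"
  proof -
    have "S - T = S \<inter> - insert t G"
      by (auto simp: T_def)
    then show ?thesis
      unfolding closedin_def using Y(2) G(2)
      by (simp add: T_def finer open_Compl openin_open_Int)
  qed
  ultimately have "T = {} \<or> T = S"
    using Y unfolding connected_space_clopen_in by blast
  then show False
    using s V openin_subset Y(2) by (auto simp: T_def)
qed

lemma locally_connected_refinement_eq_top_of_set:
  fixes S :: "real set"
  assumes Y: "connected_space Y" "locally_connected_space Y" "topspace Y = S"
    and finer: "\<And>U. openin (top_of_set S) U \<Longrightarrow> openin Y U"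
  shows "Y = top_of_set S"
proof -
  have id: "continuous_map Y (top_of_set S) id"
    unfolding continuous_map_openin_preimage_eq
  proof (intro conjI allI impI)
    show "id \<in> topspace Y \<rightarrow> topspace (top_of_set S)"
      using Y(3) by simp
    fix U assume "openin (top_of_set S) U"
    moreover have "topspace Y \<inter> id -` U = U"
      using openin_subset [OF calculation] Y(3) by auto
    ultimately show "openin Y (topspace Y \<inter> id -` U)"
      by (simp add: finer)
  qed
  have "openin (top_of_set S) U" if U: "openin Y U" for U
    unfolding openin_euclidean_subtopology_iff
  proof (intro conjI ballI)
    show "U \<subseteq> S"
      using U Y(3) openin_subset by blast
  next
    fix t assume "t \<in> U"
    then obtain V where V: "openin Y V" "connectedin Y V" "t \<in> V" "V \<subseteq> U"
      using U Y(2) unfolding locally_connected_space by blast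
    have "connectedin (top_of_set S) V"
      using connectedin_continuous_map_image [OF id V(2)] by simp
    then have "is_interval V"
      by (simp add: connectedin_subtopology is_interval_connected_1)
    moreover have "\<exists>v\<in>V. v < t" if "s \<in> S" "s < t" for s
    proof -
      have "insert t {t<..} = {t..}"
        by auto
      then have "\<not> V \<subseteq> {t..}"
        using connected_refinement_open_not_subset [OF Y(1,3) finer V(1,3) open_greaterThan [of t], where s = s] that
        by simp
      then show ?thesis
        by (auto simp: subset_eq not_le)
    qed
    moreover have "\<exists>v\<in>V. t < v" if "s \<in> S" "t < s" for s
    proof -
      have "insert t {..<t} = {..t}"
        by auto
      then have "\<not> V \<subseteq> {..t}"
        using connected_refinement_open_not_subset [OF Y(1,3) finer V(1,3) open_lessThan [of t], where s = s] that
        by simp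
      then show ?thesis
        by (auto simp: subset_eq not_le)
    qed
    ultimately obtain e where "e > 0" "\<forall>x\<in>S. dist x t < e \<longrightarrow> x \<in> V"
      using is_interval_neighbourhood [of V t S] V(3) by auto
    then show "\<exists>e>0. \<forall>x\<in>S. dist x t < e \<longrightarrow> x \<in> U"
      using V(4) by auto
  qed
  then show ?thesis
    using finer by (auto simp: topology_eq)
qed

lemma locally_connected_imp_quotient_map_real:
  fixes f :: "'a \<Rightarrow> real"
  assumes X: "connected_space X" "locally_connected_space X"
    and f: "continuous_map X (top_of_set S) f" "f ` topspace X = S"
  shows "quotient_map X (top_of_set S) f"
proof -
  let ?Y = "final_topology X f S"
  have q: "quotient_map X ?Y f"
    using f(2) by (rule quotient_map_final_topology)
  have "?Y = top_of_set S"
  proof (rule locally_connected_refinement_eq_top_of_set)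
    show "connected_space ?Y"
      using q X(1) by (rule connected_space_quotient_map_image)
    show "locally_connected_space ?Y"
      using X(2) q by (rule locally_connected_space_quotient_map_image)
    show "topspace ?Y = S"
      using f(2) by (simp add: topspace_final_topology)
    show "openin ?Y U" if "openin (top_of_set S) U" for U
      using that openin_continuous_map_preimage [OF f(1)] openin_subset
      by (fastforce simp: openin_final_topology)
  qed
  then show ?thesis
    using q by simp
qed

lemma quotient_map_if_compactin_image:
  assumes f: "continuous_map X Y f" and C: "compactin X C"
    and Y: "Hausdorff_space Y" and fC: "f ` C = topspace Y"
  shows "quotient_map X Y f"
proof (rule quotient_map_from_composition)
  show "continuous_map (subtopology X C) X id"
    by (simp add: continuous_map_from_subtopology)
  show "quotient_map (subtopology X C) Y (f \<circ> id)"
    using C fC compactin_subset_topspace [OF C]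
    by (auto intro!: continuous_imp_quotient_map continuous_map_from_subtopology f Y
             simp: compact_space_subtopology Int_absorb1)
qed (rule f)

lemma Urysohn_separating_points:
  assumes "normal_space X" "t1_space X" "a \<in> topspace X" "b \<in> topspace X" "a \<noteq> b"
  obtains f where "continuous_map X (top_of_set {0..1::real}) f" "f a = 0" "f b = 1"
proof -
  obtain f where "continuous_map X (top_of_set {0..1::real}) f" "f ` {a} \<subseteq> {0}" "f ` {b} \<subseteq> {1}"
    using Urysohn_lemma [of X "{a}" "{b}" 0 1] assms by (auto simp: t1_space_closedin_singleton)
  then show thesis
    using that by simp
qed

lemma connectedin_image_eq_Icc:
  fixes f :: "'a \<Rightarrow> real"
  assumes f: "continuous_map X (top_of_set {c..d}) f"
    and C: "connectedin X C" "a \<in> C" "b \<in> C" and fab: "f a = c" "f b = d"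
  shows "f ` C = {c..d}"
proof -
  have "connectedin (top_of_set {c..d}) (f ` C)"
    using connectedin_continuous_map_image [OF f C(1)] .
  then have "connected (f ` C)" "f ` C \<subseteq> {c..d}"
    by (simp_all add: connectedin_subtopology)
  moreover have "c \<in> f ` C" "d \<in> f ` C"
    using C fab by auto
  ultimately show ?thesis
    using connected_contains_Icc by blast
qed

lemma connectedin_maps_onto_unit_interval:
  assumes X: "normal_space X" "t1_space X"
    and C: "connectedin X C" "a \<in> C" "b \<in> C" "a \<noteq> b"
  obtains f where "continuous_map X (top_of_set {0..1::real}) f" "f ` C = {0..1}"
proof -
  have ab: "a \<in> topspace X" "b \<in> topspace X"
    using C connectedin_subset_topspace by blast+
  obtain f where f: "continuous_map X (top_of_set {0..1::real}) f" "f a = 0" "f b = 1"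
    by (rule Urysohn_separating_points [OF X ab C(4)])
  show thesis
    using f(1) connectedin_image_eq_Icc [OF f(1) C(1-3) f(2,3)] by (rule that)
qed

theorem mainTheorem6:
  fixes X :: "'a topology"
  assumes "infinite (topspace X)"
    and "connected_space X"
    and "normal_space X"
    and "Hausdorff_space X"
    and "\<not> (\<exists>f. quotient_map X (top_of_set {0..1::real}) f)"
  shows "punctiform X \<and> \<not> locally_connected_space X"
proof
  have t1: "t1_space X"
    using assms(4) by (rule Hausdorff_imp_t1_space)
  show "punctiform X"
    unfolding punctiform_def
  proof (intro allI impI notI)
    fix C assume C: "C \<subseteq> topspace X \<and> compactin X C \<and> connectedin X C"
      and "\<exists>x y. x \<in> C \<and> y \<in> C \<and> x \<noteq> y"
    then obtain f where "continuous_map X (top_of_set {0..1::real}) f" "f ` C = {0..1}"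
      using connectedin_maps_onto_unit_interval [OF assms(3) t1] C by blast
    then have "quotient_map X (top_of_set {0..1::real}) f"
      using C by (intro quotient_map_if_compactin_image) (auto simp: Hausdorff_space_subtopology)
    then show False
      using assms(5) by blast
  qed
  show "\<not> locally_connected_space X"
  proof
    assume lc: "locally_connected_space X"
    obtain a where "a \<in> topspace X"
      using assms(1) infinite_imp_nonempty by blast
    moreover obtain b where "b \<in> topspace X - {a}"
      using assms(1) infinite_imp_nonempty [of "topspace X - {a}"] by auto
    moreover have "connectedin X (topspace X)"
      using assms(2) by (simp add: connectedin_topspace)
    ultimately obtain f where "continuous_map X (top_of_set {0..1::real}) f" "f ` topspace X = {0..1}"
      using connectedin_maps_onto_unit_interval [OF assms(3) t1] by (metis DiffE singletonI)
    then show False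
      using locally_connected_imp_quotient_map_real [OF assms(2) lc] assms(5) by blast
  qed
qed

end
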